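(* Let $M,N\in\mathbb N$ with $M>N$, let $\mathcal B\subseteq\mathcal D^N$, and let $f\in L_q[0,1]$ with $\int f=0$. On $\{-1,1\}^{\mathcal B}$ with the uniform probability, define $Y(\theta)=\langle f,\sum_{K\in\mathcal B}\theta_Kh^M_K\rangle$. Then $\mathbb E(Y)=0$ and $\mathrm{Var}(Y)\le\|f\|_q^2\,|\bigcup\mathcal B|^{1/p}\,2^{-N/p}$, where $|\bigcup\mathcal B|$ is the Lebesgue measure of the union of the intervals in $\mathcal B$.
   Context: Fix $1<p<\infty$, $q=p/(p-1)$. $\langle g,f\rangle=\int_0^1 gf$. A dyadic interval is $[(i-1)2^{-n},i2^{-n})$ with $n\ge0$, $1\le i\le2^n$; $\mathcal D^n$ denotes those of length $2^{-n}$ and $\mathcal D_n=\bigcup_{k=0}^n\mathcal D^k$. For a dyadic interval $I$, $I^+$, $I^-$ are its left and right halves and $h_I=\chi_{I^+}-\chi_{I^-}$. For each $n\in\mathbb N$ a family $(h^n_I)_{I\in\mathcal D_{n-1}}$ in $L_p[0,1]$ is fixed, having the same joint distribution as $(h_I)_{I\in\mathcal D_{n-1}}$, such that the $\sigma$-algebras $\sigma(h^n_I:I\in\mathcal D_{n-1})$, $n\in\mathbb N$, are independent. *)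

theory Defs
  imports "HOL-Probability.Probability"
begin

text \<open>A dyadic interval is encoded by a pair (n,i) with 1 \<le> i \<le> 2^n; it denotes
  the half-open interval [(i-1) 2^-n, i 2^-n).\<close>

definition dyint :: "nat \<times> nat \<Rightarrow> real set" where
  "dyint K = {(real (snd K) - 1) / 2 ^ fst K ..< real (snd K) / 2 ^ fst K}"

definition Dlev :: "nat \<Rightarrow> (nat \<times> nat) set" where
  "Dlev n = {(n, i) | i. 1 \<le> i \<and> i \<le> 2 ^ n}"

definition Dupto :: "nat \<Rightarrow> (nat \<times> nat) set" where
  "Dupto n = (\<Union>k\<le>n. Dlev k)"

definition dyleft :: "nat \<times> nat \<Rightarrow> nat \<times> nat" where
  "dyleft K = (Suc (fst K), 2 * snd K - 1)"

definition dyright :: "nat \<times> nat \<Rightarrow> nat \<times> nat" where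
  "dyright K = (Suc (fst K), 2 * snd K)"

definition haar :: "nat \<times> nat \<Rightarrow> real \<Rightarrow> real" where
  "haar K x = indicator (dyint (dyleft K)) x - indicator (dyint (dyright K)) x"

abbreviation U01 :: "real measure" where
  "U01 \<equiv> lebesgue_on {0..1}"

definition pair01 :: "(real \<Rightarrow> real) \<Rightarrow> (real \<Rightarrow> real) \<Rightarrow> real" where
  "pair01 g f = (LINT x|U01. g x * f x)"

definition Lnorm :: "real \<Rightarrow> (real \<Rightarrow> real) \<Rightarrow> real" where
  "Lnorm r f = (LINT x|U01. \<bar>f x\<bar> powr r) powr (1 / r)"

definition hvec :: "nat \<Rightarrow> (nat \<Rightarrow> nat \<times> nat \<Rightarrow> real \<Rightarrow> real) \<Rightarrow> real \<Rightarrow> (nat \<times> nat \<Rightarrow> real)" where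
  "hvec n hh x = (\<lambda>I\<in>Dupto (n - 1). hh n I x)"

definition haarvec :: "nat \<Rightarrow> real \<Rightarrow> (nat \<times> nat \<Rightarrow> real)" where
  "haarvec n x = (\<lambda>I\<in>Dupto (n - 1). haar I x)"

abbreviation vecspace :: "nat \<Rightarrow> (nat \<times> nat \<Rightarrow> real) measure" where
  "vecspace n \<equiv> PiM (Dupto (n - 1)) (\<lambda>_. borel)"

end

theory Submission
  imports Defs
begin

text \<open>
  With a_K = <f, h^M_K> one has Y(\<theta>) = \<Sum> \<theta>_K a_K, so E Y = 0 by the symmetry
  \<theta>_K \<mapsto> -\<theta>_K and Var Y = \<Sum> a_K^2. Since (h^M_K) has the joint law of the
  Haar system, ||\<Sum> s_K h^M_K||_p = ||\<Sum> s_K h_K||_p \<le> |\<Union>B'|^(1/p) whenever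
  |s_K| \<le> 1 and B' \<subseteq> B, because the Haar functions of level N have disjoint
  supports. By H\<ouml>lder, |a_K| \<le> ||f||_q 2^(-N/p), and choosing s_K = sgn a_K gives
  \<Sum> |a_K| \<le> ||f||_q |\<Union>B|^(1/p); hence \<Sum> a_K^2 \<le> max |a_K| \<Sum> |a_K| is
  bounded as claimed.
\<close>

lemma Holder_inequality:
  fixes f g :: "'a \<Rightarrow> real"
  assumes p: "1 < p" and q: "1 < q" and pq: "1/p + 1/q = 1"
    and f[measurable]: "f \<in> borel_measurable M" and g[measurable]: "g \<in> borel_measurable M"
    and fp: "integrable M (\<lambda>x. \<bar>f x\<bar> powr p)" and gq: "integrable M (\<lambda>x. \<bar>g x\<bar> powr q)"
  shows "integrable M (\<lambda>x. f x * g x)"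
    and "(LINT x|M. \<bar>f x * g x\<bar>)
           \<le> (LINT x|M. \<bar>f x\<bar> powr p) powr (1/p) * (LINT x|M. \<bar>g x\<bar> powr q) powr (1/q)"
proof -
  have young: "a * b \<le> a powr p / p + b powr q / q" if "0 \<le> a" "0 \<le> b" for a b :: real
    using Youngs_inequality[OF p q pq that] .
  show int: "integrable M (\<lambda>x. f x * g x)"
  proof (rule Bochner_Integration.integrable_bound)
    show "integrable M (\<lambda>x. \<bar>f x\<bar> powr p / p + \<bar>g x\<bar> powr q / q)"
      using fp gq by auto
    show "AE x in M. norm (f x * g x) \<le> norm (\<bar>f x\<bar> powr p / p + \<bar>g x\<bar> powr q / q)"
      using p q by (auto simp: abs_mult intro!: order_trans[OF young])
  qed simp
  define A where "A = (LINT x|M. \<bar>f x\<bar> powr p)"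
  define G where "G = (LINT x|M. \<bar>g x\<bar> powr q)"
  show "(LINT x|M. \<bar>f x * g x\<bar>) \<le> A powr (1/p) * G powr (1/q)"
  proof (cases "A = 0 \<or> G = 0")
    case True
    have "AE x in M. f x * g x = 0"
      using True integral_nonneg_eq_0_iff_AE[OF fp] integral_nonneg_eq_0_iff_AE[OF gq]
      by (auto simp: A_def G_def elim!: AE_mp)
    then have "(LINT x|M. \<bar>f x * g x\<bar>) = 0"
      by (subst integral_cong_AE[where g = "\<lambda>_. 0"]) (auto elim: AE_mp)
    then show ?thesis by simp
  next
    case False
    moreover have "A \<ge> 0" "G \<ge> 0" by (simp_all add: A_def G_def)
    ultimately have A: "A > 0" and G: "G > 0" by auto
    define a where "a = A powr (1/p)"
    define b where "b = G powr (1/q)"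
    have a: "a > 0" "a powr p = A" and b: "b > 0" "b powr q = G"
      using A G p q by (auto simp: a_def b_def powr_powr)
    have pt: "\<bar>f x * g x\<bar> / (a * b) \<le> (\<bar>f x\<bar> powr p / A) / p + (\<bar>g x\<bar> powr q / G) / q" for x
    proof -
      have "\<bar>f x * g x\<bar> / (a * b) = (\<bar>f x\<bar> / a) * (\<bar>g x\<bar> / b)" by (simp add: abs_mult)
      also have "\<dots> \<le> (\<bar>f x\<bar> / a) powr p / p + (\<bar>g x\<bar> / b) powr q / q"
        by (rule young) (use a b in auto)
      also have "\<dots> = (\<bar>f x\<bar> powr p / A) / p + (\<bar>g x\<bar> powr q / G) / q"
        using a b by (simp add: powr_divide)
      finally show ?thesis .
    qed
    have "(LINT x|M. \<bar>f x * g x\<bar>) / (a * b) = (LINT x|M. \<bar>f x * g x\<bar> / (a * b))"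
      by simp
    also have "\<dots> \<le> (LINT x|M. (\<bar>f x\<bar> powr p / A) / p + (\<bar>g x\<bar> powr q / G) / q)"
      by (rule integral_mono) (use int fp gq pt in auto)
    also have "\<dots> = (A / A) / p + (G / G) / q"
      using fp gq by (simp add: A_def G_def)
    also have "\<dots> = 1" using A G pq by simp
    finally show ?thesis using a b by (simp add: a_def b_def field_simps)
  qed
qed

lemma conjugate_exponent:
  fixes p q :: real
  assumes "1 < p" and "q = p / (p - 1)"
  shows "1 < q" and "1/q + 1/p = 1"
proof -
  show "1 < q" using assms by (simp add: less_divide_eq)
  have "1/q = (p - 1) / p" using assms by simp
  then show "1/q + 1/p = 1" using \<open>1 < p\<close> by (simp add: field_simps)
qed


lemma finite_Dlev: "finite (Dlev N)"
proof -
  have "Dlev N = Pair N ` {1..2^N}" by (auto simp: Dlev_def)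
  then show ?thesis by simp
qed

lemma Dlev_subset_Dupto: "N < M \<Longrightarrow> Dlev N \<subseteq> Dupto (M - 1)"
  unfolding Dupto_def by (intro UN_upper) auto

lemma dyint_subset_unit_interval:
  assumes "K \<in> Dlev N"
  shows "dyint K \<subseteq> {0..1}"
proof -
  obtain i where K: "K = (N, i)" "1 \<le> i" "i \<le> 2 ^ N" using assms by (auto simp: Dlev_def)
  have "real i \<le> 2 ^ N" using K(3) by (metis of_nat_le_iff of_nat_numeral of_nat_power)
  then have lo: "0 \<le> (real i - 1) / 2 ^ N" and hi: "real i / 2 ^ N \<le> 1" using K(2) by simp_all
  show ?thesis
  proof
    fix x assume "x \<in> dyint K"
    then have "(real i - 1) / 2 ^ N \<le> x" "x < real i / 2 ^ N" by (simp_all add: K dyint_def)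
    then have "0 \<le> x" "x \<le> 1" using lo hi by linarith+
    then show "x \<in> {0..1}" by simp
  qed
qed

lemma dyint_Dlev_disjoint:
  assumes "K \<in> Dlev N" "K' \<in> Dlev N" "x \<in> dyint K" "x \<in> dyint K'"
  shows "K = K'"
proof -
  obtain i j where K: "K = (N, i)" and K': "K' = (N, j)" using assms(1,2) by (auto simp: Dlev_def)
  have "real i - 1 \<le> x * 2 ^ N" "x * 2 ^ N < real i"
    "real j - 1 \<le> x * 2 ^ N" "x * 2 ^ N < real j"
    using assms(3,4) by (auto simp: K K' dyint_def field_simps)
  then have "i = j" by linarith
  then show ?thesis using K K' by simp
qed

lemma measure_dyint: "K \<in> Dlev N \<Longrightarrow> measure lborel (dyint K) = 1 / 2 ^ N"
  by (auto simp: Dlev_def dyint_def measure_lborel_Ico diff_divide_distrib)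

lemma haar_eq_0_outside:
  assumes "K \<in> Dlev N" "x \<notin> dyint K"
  shows "haar K x = 0"
proof -
  obtain i where K: "K = (N, i)" "1 \<le> i" using assms(1) by (auto simp: Dlev_def)
  have "real (2 * i - 1) = 2 * real i - 1" using K(2) by (simp add: of_nat_diff)
  then have "x \<notin> dyint (dyleft K)" "x \<notin> dyint (dyright K)"
    using assms(2) by (auto simp: K dyint_def dyleft_def dyright_def field_simps)
  then show ?thesis by (simp add: haar_def)
qed

lemma abs_haar_le_1: "\<bar>haar K x\<bar> \<le> 1"
  by (auto simp: haar_def indicator_def)

lemma borel_measurable_haar[measurable]: "haar K \<in> borel_measurable borel"
  unfolding haar_def dyint_def by measurable

lemma borel_measurable_U01_of_borel: "g \<in> borel_measurable borel \<Longrightarrow> g \<in> borel_measurable U01"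
  by (intro measurable_restrict_space1 measurable_completion) simp

lemma abs_sum_haar_le_indicator:
  assumes B: "finite B" "B \<subseteq> Dlev N" and s: "\<And>K. \<bar>s K\<bar> \<le> 1"
  shows "\<bar>\<Sum>K\<in>B. s K * haar K x\<bar> \<le> indicator (\<Union>K\<in>B. dyint K) x"
proof (cases "\<exists>K\<in>B. x \<in> dyint K")
  case False
  then have "\<forall>K\<in>B. haar K x = 0" using haar_eq_0_outside B by blast
  then show ?thesis by simp
next
  case True
  then obtain K0 where K0: "K0 \<in> B" "x \<in> dyint K0" by blast
  have "haar K x = 0" if "K \<in> B - {K0}" for K
    using that haar_eq_0_outside dyint_Dlev_disjoint B K0 by blast
  then have "(\<Sum>K\<in>B. s K * haar K x) = s K0 * haar K0 x"
    using B K0 by (simp add: sum.remove)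
  then have "\<bar>\<Sum>K\<in>B. s K * haar K x\<bar> \<le> 1"
    using s[of K0] abs_haar_le_1[of K0 x] by (simp add: abs_mult mult_le_one)
  moreover have "x \<in> (\<Union>K\<in>B. dyint K)" using K0 by blast
  ultimately show ?thesis by simp
qed

lemma integral_abs_sum_haar_powr_le:
  assumes B: "finite B" "B \<subseteq> Dlev N" and s: "\<And>K. \<bar>s K\<bar> \<le> 1" and p: "0 < p"
  shows "integrable U01 (\<lambda>x. \<bar>\<Sum>K\<in>B. s K * haar K x\<bar> powr p)"
    and "(LINT x|U01. \<bar>\<Sum>K\<in>B. s K * haar K x\<bar> powr p) \<le> measure lborel (\<Union>K\<in>B. dyint K)"
proof -
  define S where "S = (\<Union>K\<in>B. dyint K)"
  have "S \<subseteq> {0..1}"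
    using B dyint_subset_unit_interval unfolding S_def by blast
  moreover have "S \<in> sets borel" using B(1) by (auto simp: S_def dyint_def)
  ultimately have S: "S \<in> sets borel" "S \<subseteq> {0..1}" by simp_all
  have le: "\<bar>\<Sum>K\<in>B. s K * haar K x\<bar> powr p \<le> indicator S x" for x
    using abs_sum_haar_le_indicator[where s = s and x = x, OF B s] p powr_mono2[of p _ 1]
    by (cases "x \<in> S") (auto simp: S_def)
  have "finite_measure U01" by (rule finite_measure_lebesgue_on) simp
  then have "emeasure U01 S < \<infinity>"
    using finite_measure.emeasure_finite by (auto simp: top.not_eq_extremum)
  moreover have "S \<in> sets U01" using S by (auto simp: sets_restrict_space_iff)
  ultimately have ind: "integrable U01 (indicator S :: real \<Rightarrow> real)" by simp
  show int: "integrable U01 (\<lambda>x. \<bar>\<Sum>K\<in>B. s K * haar K x\<bar> powr p)"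
    by (rule Bochner_Integration.integrable_bound[OF ind]) (use le in \<open>auto intro: borel_measurable_U01_of_borel\<close>)
  have "(LINT x|U01. \<bar>\<Sum>K\<in>B. s K * haar K x\<bar> powr p) \<le> (LINT x|U01. indicator S x)"
    by (rule integral_mono[OF int ind]) (use le in auto)
  also have "\<dots> = measure lebesgue S"
    using S by (simp add: Int_absorb2 measure_restrict_space)
  also have "\<dots> = measure lborel S" using S by (simp add: measure_completion)
  finally show "(LINT x|U01. \<bar>\<Sum>K\<in>B. s K * haar K x\<bar> powr p) \<le> measure lborel (\<Union>K\<in>B. dyint K)"
    by (simp add: S_def)
qed

abbreviation sign_vectors :: "'k set \<Rightarrow> ('k \<Rightarrow> real) set" where
  "sign_vectors B \<equiv> PiE B (\<lambda>_. {-1, 1})"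

lemma sum_sign_vectors_odd_eq_0:
  fixes B :: "'k set"
  assumes K: "K \<in> B" and F: "\<And>\<theta>. F (\<theta>(K := - \<theta> K)) = F \<theta>"
  shows "(\<Sum>\<theta>\<in>sign_vectors B. \<theta> K * F \<theta>) = 0"
proof -
  let ?flip = "\<lambda>\<theta>::'k \<Rightarrow> real. \<theta>(K := - \<theta> K)"
  have "?flip \<theta> \<in> sign_vectors B" if "\<theta> \<in> sign_vectors B" for \<theta>
    using that K by (auto simp: PiE_iff extensional_def)
  then have "(\<Sum>\<theta>\<in>sign_vectors B. \<theta> K * F \<theta>) = (\<Sum>\<theta>\<in>sign_vectors B. ?flip \<theta> K * F (?flip \<theta>))"
    by (intro sum.reindex_bij_witness[of _ ?flip ?flip]) auto
  also have "\<dots> = - (\<Sum>\<theta>\<in>sign_vectors B. \<theta> K * F \<theta>)"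
    by (simp add: F sum_negf)
  finally show ?thesis by simp
qed

lemma sum_sign_vectors_mult:
  assumes "K \<in> B" "K' \<in> B"
  shows "(\<Sum>\<theta>\<in>sign_vectors B. \<theta> K * \<theta> K') = (if K = K' then real (card (sign_vectors B)) else 0)"
proof (cases "K = K'")
  case True
  have "(\<Sum>\<theta>\<in>sign_vectors B. \<theta> K * \<theta> K') = (\<Sum>\<theta>\<in>sign_vectors B. 1)"
    using assms True by (intro sum.cong) (auto simp: PiE_iff)
  then show ?thesis using True by simp
next
  case False
  then show ?thesis using sum_sign_vectors_odd_eq_0[of K B "\<lambda>\<theta>. \<theta> K'"] assms by simp
qed

lemma expectation_Rademacher_sum:
  assumes "finite B"
  shows "measure_pmf.expectation (pmf_of_set (sign_vectors B)) (\<lambda>\<theta>. \<Sum>K\<in>B. \<theta> K * a K) = 0"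
proof -
  have "(\<Sum>\<theta>\<in>sign_vectors B. \<Sum>K\<in>B. \<theta> K * a K) = (\<Sum>K\<in>B. \<Sum>\<theta>\<in>sign_vectors B. \<theta> K * a K)"
    by (rule sum.swap)
  also have "\<dots> = 0"
    using sum_sign_vectors_odd_eq_0[of _ B "\<lambda>_. a _"] by (intro sum.neutral) auto
  finally show ?thesis
    using assms by (simp add: integral_pmf_of_set finite_PiE PiE_eq_empty_iff)
qed

lemma variance_Rademacher_sum:
  assumes "finite B"
  shows "measure_pmf.variance (pmf_of_set (sign_vectors B)) (\<lambda>\<theta>. \<Sum>K\<in>B. \<theta> K * a K)
           = (\<Sum>K\<in>B. (a K)\<^sup>2)"
proof -
  let ?S = "sign_vectors B"
  have S: "finite ?S" "?S \<noteq> {}" using assms by (simp_all add: finite_PiE PiE_eq_empty_iff)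
  have "(\<Sum>\<theta>\<in>?S. (\<Sum>K\<in>B. \<theta> K * a K)\<^sup>2) = (\<Sum>\<theta>\<in>?S. \<Sum>K\<in>B. \<Sum>K'\<in>B. a K * a K' * (\<theta> K * \<theta> K'))"
    by (simp add: power2_eq_square sum_product algebra_simps)
  also have "\<dots> = (\<Sum>K\<in>B. \<Sum>\<theta>\<in>?S. \<Sum>K'\<in>B. a K * a K' * (\<theta> K * \<theta> K'))"
    by (rule sum.swap)
  also have "\<dots> = (\<Sum>K\<in>B. \<Sum>K'\<in>B. a K * a K' * (\<Sum>\<theta>\<in>?S. \<theta> K * \<theta> K'))"
    by (simp only: sum.swap[of _ ?S] sum_distrib_left)
  also have "\<dots> = (\<Sum>K\<in>B. (a K)\<^sup>2) * real (card ?S)"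
    using assms by (simp add: sum_sign_vectors_mult if_distrib sum.delta' sum_distrib_right power2_eq_square cong: sum.cong if_cong)
  finally show ?thesis
    using S expectation_Rademacher_sum[OF assms] by (simp add: integral_pmf_of_set)
qed


lemma distr_eq_imp_integral_comp_eq:
  fixes \<phi> :: "'b \<Rightarrow> real"
  assumes X: "X \<in> measurable M N" and Y: "Y \<in> measurable M N"
    and XY: "distr M N X = distr M N Y" and \<phi>: "\<phi> \<in> borel_measurable N"
  shows "integrable M (\<lambda>x. \<phi> (X x)) = integrable M (\<lambda>x. \<phi> (Y x))"
    and "(LINT x|M. \<phi> (X x)) = (LINT x|M. \<phi> (Y x))"
  using integrable_distr_eq[OF X \<phi>] integrable_distr_eq[OF Y \<phi>]
    integral_distr[OF X \<phi>] integral_distr[OF Y \<phi>] XY by simp_all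

lemma sum_power2_le_mult_sum_abs:
  fixes a :: "'k \<Rightarrow> real"
  assumes "\<And>K. K \<in> B \<Longrightarrow> \<bar>a K\<bar> \<le> c"
  shows "(\<Sum>K\<in>B. (a K)\<^sup>2) \<le> c * (\<Sum>K\<in>B. \<bar>a K\<bar>)"
proof -
  have "(\<Sum>K\<in>B. (a K)\<^sup>2) = (\<Sum>K\<in>B. \<bar>a K\<bar> * \<bar>a K\<bar>)" by (simp add: power2_eq_square)
  also have "\<dots> \<le> (\<Sum>K\<in>B. c * \<bar>a K\<bar>)"
    using assms by (intro sum_mono mult_right_mono) auto
  finally show ?thesis by (simp add: sum_distrib_left)
qed

locale haar_copy_pairing =
  fixes p q :: real and hh :: "nat \<Rightarrow> nat \<times> nat \<Rightarrow> real \<Rightarrow> real"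
    and M N :: nat and f :: "real \<Rightarrow> real"
  assumes p: "1 < p" and q: "q = p / (p - 1)"
    and hh_meas: "\<And>I. I \<in> Dupto (M - 1) \<Longrightarrow> hh M I \<in> borel_measurable U01"
    and hh_distr: "distr U01 (vecspace M) (hvec M hh) = distr U01 (vecspace M) (haarvec M)"
    and MN: "N < M"
    and f_meas: "f \<in> borel_measurable U01"
    and f_Lq: "integrable U01 (\<lambda>x. \<bar>f x\<bar> powr q)"
begin

lemma integral_abs_sum_hh_powr_eq_haar:
  assumes B: "B \<subseteq> Dupto (M - 1)"
  shows "integrable U01 (\<lambda>x. \<bar>\<Sum>K\<in>B. s K * hh M K x\<bar> powr r)
           = integrable U01 (\<lambda>x. \<bar>\<Sum>K\<in>B. s K * haar K x\<bar> powr r)"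
    and "(LINT x|U01. \<bar>\<Sum>K\<in>B. s K * hh M K x\<bar> powr r)
           = (LINT x|U01. \<bar>\<Sum>K\<in>B. s K * haar K x\<bar> powr r)"
proof -
  define \<phi> where "\<phi> v = \<bar>\<Sum>K\<in>B. s K * v K\<bar> powr r" for v :: "nat \<times> nat \<Rightarrow> real"
  have \<phi>: "\<phi> \<in> borel_measurable (vecspace M)"
    unfolding \<phi>_def using B
    by (intro measurable_abs_powr borel_measurable_sum borel_measurable_times
        measurable_const measurable_component_singleton) auto
  have "hvec M hh \<in> measurable U01 (vecspace M)"
    unfolding hvec_def by (auto intro!: measurable_restrict hh_meas)
  moreover have "haarvec M \<in> measurable U01 (vecspace M)"
    unfolding haarvec_def by (auto intro!: measurable_restrict borel_measurable_U01_of_borel)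
  ultimately have transfer:
      "integrable U01 (\<lambda>x. \<phi> (hvec M hh x)) = integrable U01 (\<lambda>x. \<phi> (haarvec M x))"
      "(LINT x|U01. \<phi> (hvec M hh x)) = (LINT x|U01. \<phi> (haarvec M x))"
    using distr_eq_imp_integral_comp_eq[OF _ _ hh_distr \<phi>] by blast+
  have "\<phi> (hvec M hh x) = \<bar>\<Sum>K\<in>B. s K * hh M K x\<bar> powr r"
    and "\<phi> (haarvec M x) = \<bar>\<Sum>K\<in>B. s K * haar K x\<bar> powr r" for x
    unfolding \<phi>_def hvec_def haarvec_def using B
    by (auto intro!: arg_cong2[where f = "(powr)"] arg_cong[where f = abs] sum.cong)
  then show "integrable U01 (\<lambda>x. \<bar>\<Sum>K\<in>B. s K * hh M K x\<bar> powr r)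
           = integrable U01 (\<lambda>x. \<bar>\<Sum>K\<in>B. s K * haar K x\<bar> powr r)"
    and "(LINT x|U01. \<bar>\<Sum>K\<in>B. s K * hh M K x\<bar> powr r)
           = (LINT x|U01. \<bar>\<Sum>K\<in>B. s K * haar K x\<bar> powr r)"
    using transfer by simp_all
qed

lemma
  assumes B: "B \<subseteq> Dlev N" and s: "\<And>K. \<bar>s K\<bar> \<le> 1"
  shows integrable_f_sum_hh: "integrable U01 (\<lambda>x. f x * (\<Sum>K\<in>B. s K * hh M K x))"
    and abs_pair01_sum_hh_le:
      "\<bar>pair01 f (\<lambda>x. \<Sum>K\<in>B. s K * hh M K x)\<bar>
         \<le> Lnorm q f * measure lborel (\<Union>K\<in>B. dyint K) powr (1/p)"
proof -
  have finB: "finite B" using B finite_Dlev finite_subset by blast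
  have BD: "B \<subseteq> Dupto (M - 1)" using B Dlev_subset_Dupto[OF MN] by blast
  have g_meas: "(\<lambda>x. \<Sum>K\<in>B. s K * hh M K x) \<in> borel_measurable U01"
    using BD hh_meas by (intro borel_measurable_sum borel_measurable_times measurable_const) auto
  \<comment> \<open>the copies have the law of the Haar system, so the L_p bound for Haar sums carries over\<close>
  note haar = integral_abs_sum_haar_powr_le[OF finB B s, of p]
  note same_law = integral_abs_sum_hh_powr_eq_haar[OF BD, of s p]
  have g_Lp: "integrable U01 (\<lambda>x. \<bar>\<Sum>K\<in>B. s K * hh M K x\<bar> powr p)"
    using haar(1) same_law(1) p by simp
  note Holder = Holder_inequality[OF conjugate_exponent(1)[OF p q] p conjugate_exponent(2)[OF p q]
      f_meas g_meas f_Lq g_Lp]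
  show "integrable U01 (\<lambda>x. f x * (\<Sum>K\<in>B. s K * hh M K x))" by (rule Holder(1))
  have "\<bar>pair01 f (\<lambda>x. \<Sum>K\<in>B. s K * hh M K x)\<bar> \<le> (LINT x|U01. \<bar>f x * (\<Sum>K\<in>B. s K * hh M K x)\<bar>)"
    unfolding pair01_def by (rule integral_abs_bound)
  also have "\<dots> \<le> Lnorm q f * (LINT x|U01. \<bar>\<Sum>K\<in>B. s K * hh M K x\<bar> powr p) powr (1/p)"
    using Holder(2) by (simp add: Lnorm_def)
  also have "\<dots> \<le> Lnorm q f * measure lborel (\<Union>K\<in>B. dyint K) powr (1/p)"
    using haar(2) same_law(2) p by (intro mult_left_mono powr_mono2) (auto simp: Lnorm_def)
  finally show "\<bar>pair01 f (\<lambda>x. \<Sum>K\<in>B. s K * hh M K x)\<bar>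
         \<le> Lnorm q f * measure lborel (\<Union>K\<in>B. dyint K) powr (1/p)" .
qed

lemma pair01_sum_hh:
  assumes B: "B \<subseteq> Dlev N"
  shows "pair01 f (\<lambda>x. \<Sum>K\<in>B. \<theta> K * hh M K x) = (\<Sum>K\<in>B. \<theta> K * pair01 f (hh M K))"
proof -
  have "finite B" using B finite_Dlev finite_subset by blast
  moreover have "integrable U01 (\<lambda>x. f x * hh M K x)" if "K \<in> B" for K
    using integrable_f_sum_hh[of "{K}" "\<lambda>_. 1"] that B by auto
  ultimately show ?thesis
    by (simp add: pair01_def sum_distrib_left mult.left_commute)
qed

lemma abs_pair01_hh_le:
  assumes K: "K \<in> Dlev N"
  shows "\<bar>pair01 f (hh M K)\<bar> \<le> Lnorm q f * 2 powr (- real N / p)"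
proof -
  have "(1 / 2 ^ N :: real) = 2 powr (- real N)"
    by (simp add: powr_minus powr_realpow inverse_eq_divide)
  then have "(1 / 2 ^ N :: real) powr (1/p) = 2 powr (- real N / p)"
    by (simp add: powr_powr)
  then show ?thesis
    using abs_pair01_sum_hh_le[of "{K}" "\<lambda>_. 1"] K measure_dyint[OF K] by simp
qed

lemma sum_abs_pair01_hh_le:
  assumes B: "B \<subseteq> Dlev N"
  shows "(\<Sum>K\<in>B. \<bar>pair01 f (hh M K)\<bar>) \<le> Lnorm q f * measure lborel (\<Union>K\<in>B. dyint K) powr (1/p)"
proof -
  \<comment> \<open>duality: test f against the combination with coefficients sgn (pair01 f (hh M K))\<close>
  have "(\<Sum>K\<in>B. \<bar>pair01 f (hh M K)\<bar>) = pair01 f (\<lambda>x. \<Sum>K\<in>B. sgn (pair01 f (hh M K)) * hh M K x)"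
    unfolding pair01_sum_hh[OF B] by (simp add: abs_sgn mult.commute)
  also have "\<dots> \<le> Lnorm q f * measure lborel (\<Union>K\<in>B. dyint K) powr (1/p)"
    using abs_pair01_sum_hh_le[OF B, of "\<lambda>K. sgn (pair01 f (hh M K))"] by (simp add: abs_sgn_eq)
  finally show ?thesis .
qed

end

theorem mainTheorem5:
  fixes p q :: real and hh :: "nat \<Rightarrow> nat \<times> nat \<Rightarrow> real \<Rightarrow> real"
    and M N :: nat and B :: "(nat \<times> nat) set" and f :: "real \<Rightarrow> real"
  assumes p: "1 < p" and q: "q = p / (p - 1)"
    and hh_meas: "\<And>n I. 1 \<le> n \<Longrightarrow> I \<in> Dupto (n - 1) \<Longrightarrow> hh n I \<in> borel_measurable U01"
    and hh_Lp: "\<And>n I. 1 \<le> n \<Longrightarrow> I \<in> Dupto (n - 1) \<Longrightarrow>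
                   integrable U01 (\<lambda>x. \<bar>hh n I x\<bar> powr p)"
    and hh_distr: "\<And>n. 1 \<le> n \<Longrightarrow>
                   distr U01 (vecspace n) (hvec n hh) = distr U01 (vecspace n) (haarvec n)"
    and hh_indep: "prob_space.indep_vars U01 vecspace (\<lambda>n. hvec n hh) {1..}"
    and MN: "N < M"
    and B: "B \<subseteq> Dlev N"
    and f_meas: "f \<in> borel_measurable U01"
    and f_Lq: "integrable U01 (\<lambda>x. \<bar>f x\<bar> powr q)"
    and f_mean: "(LINT x|U01. f x) = 0"
  shows "measure_pmf.expectation (pmf_of_set (PiE B (\<lambda>_. {-1, 1::real})))
            (\<lambda>\<theta>. pair01 f (\<lambda>x. \<Sum>K\<in>B. \<theta> K * hh M K x)) = 0
       \<and> measure_pmf.variance (pmf_of_set (PiE B (\<lambda>_. {-1, 1::real})))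
            (\<lambda>\<theta>. pair01 f (\<lambda>x. \<Sum>K\<in>B. \<theta> K * hh M K x))
         \<le> (Lnorm q f)\<^sup>2 * (measure lborel (\<Union>K\<in>B. dyint K)) powr (1 / p)
             * 2 powr (- real N / p)"
proof -
  interpret haar_copy_pairing p q hh M N f
    using p q hh_meas hh_distr MN f_meas f_Lq by unfold_locales auto
  have finB: "finite B" using B finite_Dlev finite_subset by blast
  define a where "a K = pair01 f (hh M K)" for K
  define L where "L = Lnorm q f"
  define \<mu> where "\<mu> = measure lborel (\<Union>K\<in>B. dyint K)"
  have Y: "pair01 f (\<lambda>x. \<Sum>K\<in>B. \<theta> K * hh M K x) = (\<Sum>K\<in>B. \<theta> K * a K)" for \<theta>
    using pair01_sum_hh[OF B] by (simp add: a_def)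
  have "measure_pmf.variance (pmf_of_set (sign_vectors B)) (\<lambda>\<theta>. \<Sum>K\<in>B. \<theta> K * a K)
          = (\<Sum>K\<in>B. (a K)\<^sup>2)"
    using variance_Rademacher_sum[OF finB] .
  also have "\<dots> \<le> L * 2 powr (- real N / p) * (\<Sum>K\<in>B. \<bar>a K\<bar>)"
    using B abs_pair01_hh_le by (intro sum_power2_le_mult_sum_abs) (auto simp: a_def L_def)
  also have "\<dots> \<le> L * 2 powr (- real N / p) * (L * \<mu> powr (1/p))"
    using sum_abs_pair01_hh_le[OF B] by (intro mult_left_mono) (auto simp: a_def L_def \<mu>_def Lnorm_def)
  also have "\<dots> = L\<^sup>2 * \<mu> powr (1/p) * 2 powr (- real N / p)"
    by (simp add: power2_eq_square)
  finally show ?thesis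
    unfolding Y L_def[symmetric] \<mu>_def[symmetric] using expectation_Rademacher_sum[OF finB] by blast
qed

end
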